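(* Let $X$ be a nonempty compact metric space. Any two complete tree systems of peripheral extensions of $X$ are isomorphic.
   Context: A peripheral extension of $X$ is a compact metric space $\ddot X$ containing a countably infinite discrete open dense subset $P$ (the peripheral points) with $\ddot X\setminus P$ homeomorphic to $X$. Let $T$ be the countable tree in which every vertex has infinite valence, $V_T$ its vertex set, and $N_t$ the set of oriented edges of $T$ with initial vertex $t$. A complete tree system of peripheral extensions of $X$ is a tuple $\Theta=(\{X_t\},\{b_t\})$ where for each $t\in V_T$, $X_t$ is a space homeomorphic to $X$ equipped with a peripheral extension $\ddot X_t$ with peripheral set $P_t$, and $b_t:N_t\to P_t$ is a bijection. An isomorphism $\Theta\to\Theta'=(\{X'_t\},\{b'_t\})$ is a tuple $(\lambda,\{f_t\})$ where $\lambda:T\to T$ is a tree automorphism, each $f_t:\ddot X_t\to\ddot X'_{\lambda(t)}$ is a homeomorphism mapping $X_t$ onto $X'_{\lambda(t)}$, and $b'_{\lambda(t)}(\lambda(e))=f_t(b_t(e))$ for all $t\in V_T$, $e\in N_t$. *)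

theory Defs
  imports "HOL-Analysis.Analysis"
begin

definition is_tree :: "'v set \<Rightarrow> ('v \<times> 'v) set \<Rightarrow> bool" where
  "is_tree V E \<longleftrightarrow>
     V \<noteq> {} \<and> E \<subseteq> V \<times> V \<and>
     (\<forall>x y. (x, y) \<in> E \<longrightarrow> (y, x) \<in> E) \<and>
     (\<forall>x. (x, x) \<notin> E) \<and>
     (\<forall>x\<in>V. \<forall>y\<in>V. (x, y) \<in> E\<^sup>*) \<and>
     \<not> (\<exists>xs. 3 \<le> length xs \<and> distinct xs \<and>
            (\<forall>i. Suc i < length xs \<longrightarrow> (xs ! i, xs ! Suc i) \<in> E) \<and>
            (last xs, hd xs) \<in> E)"

definition countable_inf_valence_tree :: "'v set \<Rightarrow> ('v \<times> 'v) set \<Rightarrow> bool" where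
  "countable_inf_valence_tree V E \<longleftrightarrow>
     is_tree V E \<and> countable V \<and> (\<forall>t\<in>V. infinite {s. (t, s) \<in> E})"

definition out_edges :: "('v \<times> 'v) set \<Rightarrow> 'v \<Rightarrow> ('v \<times> 'v) set" where
  "out_edges E t = {e \<in> E. fst e = t}"

definition tree_automorphism :: "'v set \<Rightarrow> ('v \<times> 'v) set \<Rightarrow> ('v \<Rightarrow> 'v) \<Rightarrow> bool" where
  "tree_automorphism V E lam \<longleftrightarrow>
     bij_betw lam V V \<and> (\<forall>s\<in>V. \<forall>t\<in>V. (s, t) \<in> E \<longleftrightarrow> (lam s, lam t) \<in> E)"

definition edge_map :: "('v \<Rightarrow> 'v) \<Rightarrow> 'v \<times> 'v \<Rightarrow> 'v \<times> 'v" where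
  "edge_map lam e = (lam (fst e), lam (snd e))"

definition peripheral_extension :: "'c topology \<Rightarrow> 'a topology \<Rightarrow> 'a set \<Rightarrow> bool" where
  "peripheral_extension X Y P \<longleftrightarrow>
     compact_space Y \<and> metrizable_space Y \<and>
     P \<subseteq> topspace Y \<and> countable P \<and> infinite P \<and>
     subtopology Y P = discrete_topology P \<and>
     openin Y P \<and> Y closure_of P = topspace Y \<and>
     subtopology Y (topspace Y - P) homeomorphic_space X"

text \<open>A complete tree system of peripheral extensions of X over the tree (V,E):
  for each vertex t, the space Xdd t is the peripheral extension with peripheral
  set P t; the space X_t is topspace (Xdd t) - P t (with the
  subspace topology), which is homeomorphic to X; and b t is a bijection from the
  oriented edges at t onto P t.\<close>
definition tree_system ::
  "'v set \<Rightarrow> ('v \<times> 'v) set \<Rightarrow> 'c topology \<Rightarrow>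
   ('v \<Rightarrow> 'a topology) \<Rightarrow> ('v \<Rightarrow> 'a set) \<Rightarrow> ('v \<Rightarrow> 'v \<times> 'v \<Rightarrow> 'a) \<Rightarrow> bool" where
  "tree_system V E X Xdd P b \<longleftrightarrow>
     (\<forall>t\<in>V. peripheral_extension X (Xdd t) (P t) \<and> bij_betw (b t) (out_edges E t) (P t))"

definition tree_system_iso ::
  "'v set \<Rightarrow> ('v \<times> 'v) set \<Rightarrow>
   ('v \<Rightarrow> 'a topology) \<Rightarrow> ('v \<Rightarrow> 'a set) \<Rightarrow> ('v \<Rightarrow> 'v \<times> 'v \<Rightarrow> 'a) \<Rightarrow>
   ('v \<Rightarrow> 'b topology) \<Rightarrow> ('v \<Rightarrow> 'b set) \<Rightarrow> ('v \<Rightarrow> 'v \<times> 'v \<Rightarrow> 'b) \<Rightarrow>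
   ('v \<Rightarrow> 'v) \<Rightarrow> ('v \<Rightarrow> 'a \<Rightarrow> 'b) \<Rightarrow> bool" where
  "tree_system_iso V E Xdd P b Xdd' P' b' lam f \<longleftrightarrow>
     tree_automorphism V E lam \<and>
     (\<forall>t\<in>V.
        homeomorphic_map (Xdd t) (Xdd' (lam t)) (f t) \<and>
        f t ` (topspace (Xdd t) - P t) = topspace (Xdd' (lam t)) - P' (lam t) \<and>
        (\<forall>e\<in>out_edges E t. b' (lam t) (edge_map lam e) = f t (b t e)))"

end

theory Submission
  imports Defs
begin

text \<open>Any two peripheral extensions of \<open>X\<close> are homeomorphic by a homeomorphism that respects
  the peripheral sets and sends a prescribed peripheral point to a prescribed one. To see this,
  embed both into \<open>\<real>\<^sup>\<nat>\<close> using distances to the peripheral points, fix a homeomorphism \<open>h\<close>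
  of the remainders, and match the peripheral points by a back-and-forth construction so that
  \<open>h\<close> almost carries the nearest remainder point of \<open>q\<close> to that of its partner, with an error
  exceeding any \<open>\<epsilon>\<close> only finitely often. As peripheral points accumulate only at the remainder,
  \<open>h\<close> extended by the matching is continuous, hence a homeomorphism of compacta.

  The isomorphism of tree systems is then built outwards from a root: the homeomorphism chosen
  at a vertex decides, through the edge labels, where each neighbour goes, and at a new vertex
  the homeomorphism is chosen to send the label of the edge back to the parent to the label of
  the image edge.\<close>

section \<open>Back-and-forth matchings\<close>

definition finite_matching :: "'a set \<Rightarrow> 'b set \<Rightarrow> ('a \<times> 'b) set \<Rightarrow> bool" where
  "finite_matching A B M \<longleftrightarrow>
     finite M \<and> M \<subseteq> A \<times> B \<and> single_valued M \<and> single_valued (M\<inverse>)"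

lemma finite_matching_converse [simp]:
  "finite_matching B A (M\<inverse>) \<longleftrightarrow> finite_matching A B M"
  by (auto simp: finite_matching_def)

definition extend_matching :: "'b set \<Rightarrow> ('a \<Rightarrow> 'b \<Rightarrow> bool) \<Rightarrow> ('a \<times> 'b) set \<Rightarrow> 'a \<Rightarrow> ('a \<times> 'b) set"
  where "extend_matching B R M a =
    (if a \<in> Domain M then M else insert (a, SOME b. b \<in> B - Range M \<and> R a b) M)"

lemma extend_matching:
  assumes M: "finite_matching A B M" and a: "a \<in> A"
    and avail: "\<And>F. finite F \<Longrightarrow> \<exists>b\<in>B - F. R a b"
  shows "finite_matching A B (extend_matching B R M a)"
    and "M \<subseteq> extend_matching B R M a"
    and "a \<in> Domain (extend_matching B R M a)"
    and "\<And>x y. (x, y) \<in> extend_matching B R M a - M \<Longrightarrow> R x y"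
proof -
  have "finite_matching A B (extend_matching B R M a) \<and> M \<subseteq> extend_matching B R M a \<and>
    a \<in> Domain (extend_matching B R M a) \<and> (\<forall>(x, y) \<in> extend_matching B R M a - M. R x y)"
  proof (cases "a \<in> Domain M")
    case True
    then show ?thesis using M by (simp add: extend_matching_def)
  next
    case False
    define b where "b = (SOME b. b \<in> B - Range M \<and> R a b)"
    have "finite (Range M)" using M by (simp add: finite_matching_def finite_Range)
    then have "\<exists>b. b \<in> B - Range M \<and> R a b" using avail by blast
    then have b: "b \<in> B - Range M" "R a b" unfolding b_def by (metis (mono_tags, lifting) someI_ex)+
    have "finite_matching A B (insert (a, b) M)"
      using M a b(1) False by (auto simp: finite_matching_def single_valued_def)
    moreover have "extend_matching B R M a = insert (a, b) M"
      using False by (simp add: extend_matching_def b_def)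
    ultimately show ?thesis using False b by auto
  qed
  then show "finite_matching A B (extend_matching B R M a)"
    and "M \<subseteq> extend_matching B R M a"
    and "a \<in> Domain (extend_matching B R M a)"
    and "\<And>x y. (x, y) \<in> extend_matching B R M a - M \<Longrightarrow> R x y"
    by auto
qed

locale back_and_forth =
  fixes A :: "'a set" and B :: "'b set" and R :: "nat \<Rightarrow> 'a \<Rightarrow> 'b \<Rightarrow> bool" and a0 b0
  assumes countable: "countable A" "countable B"
    and base: "a0 \<in> A" "b0 \<in> B"
    and antimono: "\<And>m n a b. m \<le> n \<Longrightarrow> R n a b \<Longrightarrow> R m a b"
    and forth_available: "\<And>n a F. a \<in> A \<Longrightarrow> finite F \<Longrightarrow> \<exists>b\<in>B - F. R n a b"
    and back_available: "\<And>n b F. b \<in> B \<Longrightarrow> finite F \<Longrightarrow> \<exists>a\<in>A - F. R n a b"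
begin

text \<open>The back step is the forth step for the converse matching.\<close>
primrec stage :: "nat \<Rightarrow> ('a \<times> 'b) set" where
  "stage 0 = {(a0, b0)}"
| "stage (Suc n) =
     (extend_matching A (\<lambda>b a. R n a b)
        ((extend_matching B (R n) (stage n) (from_nat_into A n))\<inverse>) (from_nat_into B n))\<inverse>"

lemma stage_Suc:
  assumes "finite_matching A B (stage n)"
  shows "finite_matching A B (stage (Suc n))"
    and "stage n \<subseteq> stage (Suc n)"
    and "\<And>x y. (x, y) \<in> stage (Suc n) - stage n \<Longrightarrow> R n x y"
    and "from_nat_into A n \<in> Domain (stage (Suc n))"
    and "from_nat_into B n \<in> Range (stage (Suc n))"
proof -
  have "A \<noteq> {}" "B \<noteq> {}" using base by auto
  then have a: "from_nat_into A n \<in> A" and b: "from_nat_into B n \<in> B"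
    by (simp_all add: from_nat_into)
  define M where "M = extend_matching B (R n) (stage n) (from_nat_into A n)"
  define N where "N = extend_matching A (\<lambda>y x. R n x y) (M\<inverse>) (from_nat_into B n)"
  have avail_A: "\<And>F. finite F \<Longrightarrow> \<exists>y\<in>B - F. R n (from_nat_into A n) y"
    using forth_available a by blast
  have avail_B: "\<And>F. finite F \<Longrightarrow> \<exists>x\<in>A - F. R n x (from_nat_into B n)"
    using back_available b by blast
  have M: "finite_matching A B M" "stage n \<subseteq> M" "from_nat_into A n \<in> Domain M"
    "\<And>x y. (x, y) \<in> M - stage n \<Longrightarrow> R n x y"
    using extend_matching[where R = "R n", OF assms a avail_A] unfolding M_def by blast+
  have "finite_matching B A (M\<inverse>)" using M(1) by simp
  then have N: "finite_matching B A N" "M\<inverse> \<subseteq> N" "from_nat_into B n \<in> Domain N"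
    "\<And>y x. (y, x) \<in> N - M\<inverse> \<Longrightarrow> R n x y"
    using extend_matching[where R = "\<lambda>y x. R n x y", OF _ b avail_B] unfolding N_def by blast+
  have eq: "stage (Suc n) = N\<inverse>" by (simp add: M_def N_def)
  show "finite_matching A B (stage (Suc n))" using N(1) unfolding eq by simp
  show "stage n \<subseteq> stage (Suc n)" using M(2) N(2) unfolding eq by auto
  show "\<And>x y. (x, y) \<in> stage (Suc n) - stage n \<Longrightarrow> R n x y"
    using M(4) N(4) unfolding eq by auto
  show "from_nat_into A n \<in> Domain (stage (Suc n))" using M(3) N(2) unfolding eq by auto
  show "from_nat_into B n \<in> Range (stage (Suc n))" using N(3) unfolding eq by simp
qed

lemma finite_matching_stage: "finite_matching A B (stage n)"
proof (induction n)
  case 0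
  show ?case using base by (simp add: finite_matching_def single_valued_def)
next
  case (Suc n)
  show ?case by (rule stage_Suc(1)[OF Suc])
qed

lemma stage_mono: "m \<le> n \<Longrightarrow> stage m \<subseteq> stage n"
  using lift_Suc_mono_le[of stage] stage_Suc(2)[OF finite_matching_stage] by blast

definition "matching = (\<Union>n. stage n)"

lemma late_pairs_related:
  assumes "(x, y) \<in> matching" "(x, y) \<notin> stage n"
  shows "R n x y"
proof -
  obtain k where "(x, y) \<in> stage k" using assms(1) by (auto simp: matching_def)
  then show ?thesis
  proof (induction k)
    case 0
    then show ?case using assms(2) stage_mono[of 0 n] by auto
  next
    case (Suc k)
    show ?case
    proof (cases "(x, y) \<in> stage k")
      case False
      then have "R k x y" using Suc.prems stage_Suc(3)[OF finite_matching_stage] by blast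
      moreover have "n \<le> k" using stage_mono[of "Suc k" n] Suc.prems assms(2) by (meson not_less_eq_eq subsetD)
      ultimately show ?thesis using antimono by blast
    qed (rule Suc.IH)
  qed
qed

lemma matching_in_stage:
  assumes "p \<in> matching" "q \<in> matching"
  obtains n where "p \<in> stage n" "q \<in> stage n"
proof -
  obtain i j where "p \<in> stage i" "q \<in> stage j" using assms by (auto simp: matching_def)
  then show ?thesis
    using that stage_mono[of i "max i j"] stage_mono[of j "max i j"] by auto
qed

lemma single_valued_matching: "single_valued matching" "single_valued (matching\<inverse>)"
proof -
  have "x = x' \<longleftrightarrow> y = y'" if pairs: "(x, y) \<in> matching" "(x', y') \<in> matching"
    for x y x' y'
  proof -
    obtain n where "(x, y) \<in> stage n" "(x', y') \<in> stage n"
      using matching_in_stage[OF pairs] by blast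
    then show ?thesis
      using finite_matching_stage[of n] unfolding finite_matching_def single_valued_def by blast
  qed
  then show "single_valued matching" "single_valued (matching\<inverse>)"
    unfolding single_valued_def by blast+
qed

lemma Domain_matching: "Domain matching = A"
proof
  show "Domain matching \<subseteq> A"
    using finite_matching_stage by (auto simp: matching_def finite_matching_def)
  show "A \<subseteq> Domain matching"
  proof
    fix a assume "a \<in> A"
    then obtain n where "a = from_nat_into A n"
      using range_from_nat_into[of A] countable by blast
    moreover have "from_nat_into A n \<in> Domain (stage (Suc n))"
      by (rule stage_Suc(4)[OF finite_matching_stage])
    ultimately show "a \<in> Domain matching" unfolding matching_def by blast
  qed
qed

lemma Range_matching: "Range matching = B"
proof
  show "Range matching \<subseteq> B"
    using finite_matching_stage by (auto simp: matching_def finite_matching_def)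
  show "B \<subseteq> Range matching"
  proof
    fix b assume "b \<in> B"
    then obtain n where "b = from_nat_into B n"
      using range_from_nat_into[of B] countable by blast
    moreover have "from_nat_into B n \<in> Range (stage (Suc n))"
      by (rule stage_Suc(5)[OF finite_matching_stage])
    ultimately show "b \<in> Range matching" unfolding matching_def by blast
  qed
qed

lemma matching_bijection:
  obtains \<sigma> where "bij_betw \<sigma> A B" "\<sigma> a0 = b0" "\<And>n. finite {a \<in> A. \<not> R n a (\<sigma> a)}"
proof
  define \<sigma> where "\<sigma> a = (THE b. (a, b) \<in> matching)" for a
  have \<sigma>_eq: "\<sigma> a = b" if "(a, b) \<in> matching" for a b
    unfolding \<sigma>_def using that single_valued_matching(1) by (blast dest: single_valuedD)
  have \<sigma>_in: "(a, \<sigma> a) \<in> matching" if "a \<in> A" for a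
    using that Domain_matching \<sigma>_eq by blast
  show "bij_betw \<sigma> A B"
  proof (rule bij_betw_imageI)
    show "inj_on \<sigma> A"
      using \<sigma>_in single_valued_matching(2) by (metis converseI inj_onI single_valuedD)
    show "\<sigma> ` A = B"
    proof
      show "\<sigma> ` A \<subseteq> B" using \<sigma>_in Range_matching by blast
      show "B \<subseteq> \<sigma> ` A"
      proof
        fix b assume "b \<in> B"
        then obtain a where "(a, b) \<in> matching" using Range_matching by blast
        then show "b \<in> \<sigma> ` A" using \<sigma>_eq Domain_matching by force
      qed
    qed
  qed
  have "(a0, b0) \<in> stage 0" by simp
  then show "\<sigma> a0 = b0" using \<sigma>_eq unfolding matching_def by blast
  fix n
  have "{a \<in> A. \<not> R n a (\<sigma> a)} \<subseteq> Domain (stage n)"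
    using \<sigma>_in late_pairs_related by blast
  then show "finite {a \<in> A. \<not> R n a (\<sigma> a)}"
    using finite_matching_stage by (auto simp: finite_matching_def finite_Domain intro: finite_subset)
qed

end

lemma back_and_forth_bijection:
  fixes R :: "nat \<Rightarrow> 'a \<Rightarrow> 'b \<Rightarrow> bool"
  assumes "countable A" "countable B" "a0 \<in> A" "b0 \<in> B"
    and "\<And>m n a b. m \<le> n \<Longrightarrow> R n a b \<Longrightarrow> R m a b"
    and "\<And>n a F. a \<in> A \<Longrightarrow> finite F \<Longrightarrow> \<exists>b\<in>B - F. R n a b"
    and "\<And>n b F. b \<in> B \<Longrightarrow> finite F \<Longrightarrow> \<exists>a\<in>A - F. R n a b"
  obtains \<sigma> where "bij_betw \<sigma> A B" "\<sigma> a0 = b0" "\<And>n. finite {a \<in> A. \<not> R n a (\<sigma> a)}"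
proof -
  interpret back_and_forth A B R a0 b0
    by (rule back_and_forth.intro) (fact assms)+
  show ?thesis using matching_bijection that by blast
qed

section \<open>Compact metric spaces with a dense set of isolated points\<close>

text \<open>A peripheral extension realised in a metric type: \<open>Q\<close> is the peripheral set and \<open>S - Q\<close>
  the remainder.\<close>
locale peripheral_compactum =
  fixes S Q :: "'m::metric_space set"
  assumes compact: "compact S" and peripheral_subset: "Q \<subseteq> S"
    and isolated: "\<And>q. q \<in> Q \<Longrightarrow> \<exists>e>0. \<forall>y\<in>S. dist y q < e \<longrightarrow> y = q"
    and dense: "S \<subseteq> closure Q"
    and countable_peripheral: "countable Q"
    and remainder_nonempty: "S - Q \<noteq> {}"
begin

lemma compact_remainder: "compact (S - Q)"
proof -
  obtain e where e: "\<And>q. q \<in> Q \<Longrightarrow> e q > 0 \<and> (\<forall>y\<in>S. dist y q < e q \<longrightarrow> y = q)"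
    using isolated by metis
  define U where "U = (\<Union>q\<in>Q. ball q (e q))"
  have "S - Q = S - U"
    using e peripheral_subset by (force simp: U_def dist_commute)
  moreover have "open U" by (simp add: U_def open_UN)
  ultimately show ?thesis by (simp add: compact compact_diff)
qed

definition nearest :: "'m \<Rightarrow> 'm" where
  "nearest a = (SOME k. k \<in> S - Q \<and> (\<forall>y\<in>S - Q. dist a k \<le> dist a y))"

lemma nearest: "nearest a \<in> S - Q" "\<And>y. y \<in> S - Q \<Longrightarrow> dist a (nearest a) \<le> dist a y"
proof -
  have "continuous_on (S - Q) (dist a)" by (intro continuous_intros)
  then have "\<exists>k. k \<in> S - Q \<and> (\<forall>y\<in>S - Q. dist a k \<le> dist a y)"
    using continuous_attains_inf[OF compact_remainder remainder_nonempty] by blast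
  then have "nearest a \<in> S - Q \<and> (\<forall>y\<in>S - Q. dist a (nearest a) \<le> dist a y)"
    unfolding nearest_def by (rule someI_ex)
  then show "nearest a \<in> S - Q" "\<And>y. y \<in> S - Q \<Longrightarrow> dist a (nearest a) \<le> dist a y"
    by auto
qed

lemma dist_nearest_le: "x \<in> S - Q \<Longrightarrow> dist (nearest a) x \<le> 2 * dist a x"
  using dist_triangle[of "nearest a" x a] nearest(2)[of x a] by (simp add: dist_commute)

lemma finite_far_from_remainder:
  assumes "\<epsilon> > 0"
  shows "finite {q \<in> Q. \<epsilon> \<le> dist q (nearest q)}" (is "finite ?T")
proof (rule ccontr)
  assume "infinite ?T"
  then obtain x where x: "x \<in> S" "x islimpt ?T"
    using Heine_Borel_imp_Bolzano_Weierstrass[OF compact] peripheral_subset by blast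
  show False
  proof (cases "x \<in> Q")
    case True
    then obtain e where "e > 0" "\<forall>y\<in>S. dist y x < e \<longrightarrow> y = x" using isolated by blast
    then show False using x(2) peripheral_subset by (force simp: islimpt_approachable)
  next
    case False
    then obtain q where "q \<in> ?T" "dist q x < \<epsilon>"
      using x(2) assms by (auto simp: islimpt_approachable)
    then show False using nearest(2)[of x q] x(1) False by force
  qed
qed

lemma exists_peripheral_near:
  assumes "x \<in> S - Q" "\<eta> > 0" "finite F"
  shows "\<exists>q\<in>Q - F. dist (nearest q) x < \<eta>"
proof -
  have "x islimpt Q" using assms(1) dense by (auto simp: closure_def)
  then have "infinite (Q \<inter> ball x (\<eta> / 2))" using assms(2) by (simp add: islimpt_eq_infinite_ball)
  then obtain q where "q \<in> Q - F" "dist x q < \<eta> / 2"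
    using assms(3) by (metis Diff_iff IntD1 IntD2 finite_subset mem_ball subsetI)
  then show ?thesis using dist_nearest_le[OF assms(1), of q] by (force simp: dist_commute)
qed

end

locale peripheral_pair = A: peripheral_compactum S Q + B: peripheral_compactum S' Q'
  for S Q :: "'m::metric_space set" and S' Q' :: "'n::metric_space set" +
  fixes h :: "'m \<Rightarrow> 'n" and h' :: "'n \<Rightarrow> 'm"
  assumes remainder_homeomorphism: "homeomorphism (S - Q) (S' - Q') h h'"
begin

lemma h_remainder:
  "h ` (S - Q) = S' - Q'" "continuous_on (S - Q) h" "h' ` (S' - Q') = S - Q"
  "\<And>x. x \<in> S - Q \<Longrightarrow> h' (h x) = x" "\<And>y. y \<in> S' - Q' \<Longrightarrow> h (h' y) = y"
  using remainder_homeomorphism unfolding homeomorphism_def by auto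

definition compatible_matching :: "('m \<Rightarrow> 'n) \<Rightarrow> bool" where
  "compatible_matching \<sigma> \<longleftrightarrow> bij_betw \<sigma> Q Q' \<and>
     (\<forall>\<epsilon>>0. finite {a \<in> Q. \<epsilon> \<le> dist (h (A.nearest a)) (B.nearest (\<sigma> a))})"

lemma exists_compatible_matching:
  assumes "a0 \<in> Q" "a0' \<in> Q'"
  obtains \<sigma> where "compatible_matching \<sigma>" "\<sigma> a0 = a0'"
proof -
  define R where "R n a b \<longleftrightarrow> dist (h (A.nearest a)) (B.nearest b) < 1 / real (Suc n)" for n a b
  have antimono: "R m a b" if "m \<le> n" "R n a b" for m n a b
  proof -
    have "1 / real (Suc n) \<le> 1 / real (Suc m)" using that(1) by (simp add: frac_le)
    then show ?thesis using that(2) by (simp add: R_def)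
  qed
  have forward: "\<exists>b\<in>Q' - F. R n a b" if "finite F" for n a F
    using B.exists_peripheral_near[of "h (A.nearest a)" "1 / real (Suc n)" F] that
      A.nearest(1) h_remainder(1) by (force simp: R_def dist_commute)
  have backward: "\<exists>a\<in>Q - F. R n a b" if F: "finite F" for n b F
  proof -
    have z: "h' (B.nearest b) \<in> S - Q" using B.nearest(1) h_remainder(3) by blast
    obtain \<delta> where \<delta>: "\<delta> > 0"
      "\<And>x x'. x \<in> S - Q \<Longrightarrow> x' \<in> S - Q \<Longrightarrow> dist x' x < \<delta> \<Longrightarrow> dist (h x') (h x) < 1 / real (Suc n)"
      using compact_uniformly_continuous[OF h_remainder(2) A.compact_remainder]
      unfolding uniformly_continuous_on_def by (metis of_nat_0_less_iff zero_less_Suc zero_less_divide_1_iff)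
    obtain a where "a \<in> Q - F" "dist (A.nearest a) (h' (B.nearest b)) < \<delta>"
      using A.exists_peripheral_near[OF z \<delta>(1) F] by blast
    then show ?thesis
      using \<delta>(2)[OF z A.nearest(1)] h_remainder(5)[OF B.nearest(1)] by (auto simp: R_def)
  qed
  obtain \<sigma> where \<sigma>: "bij_betw \<sigma> Q Q'" "\<sigma> a0 = a0'" "\<And>n. finite {a \<in> Q. \<not> R n a (\<sigma> a)}"
    using back_and_forth_bijection[of Q Q' a0 a0' R] A.countable_peripheral B.countable_peripheral
      assms antimono forward backward by blast
  have "finite {a \<in> Q. \<epsilon> \<le> dist (h (A.nearest a)) (B.nearest (\<sigma> a))}" if \<epsilon>: "\<epsilon> > 0" for \<epsilon>
  proof -
    obtain n where "1 / real (Suc n) < \<epsilon>" using nat_approx_posE[OF \<epsilon>] by blast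
    then have "{a \<in> Q. \<epsilon> \<le> dist (h (A.nearest a)) (B.nearest (\<sigma> a))} \<subseteq> {a \<in> Q. \<not> R n a (\<sigma> a)}"
      by (auto simp: R_def)
    then show ?thesis using \<sigma>(3) by (rule finite_subset)
  qed
  then show ?thesis using that \<sigma> by (auto simp: compatible_matching_def)
qed

lemma compatible_matching_near_remainder:
  assumes \<sigma>: "compatible_matching \<sigma>" and x: "x \<in> S - Q" and "\<epsilon> > 0"
  obtains \<delta> where "\<delta> > 0" "\<And>y. y \<in> Q \<Longrightarrow> dist y x < \<delta> \<Longrightarrow> dist (\<sigma> y) (h x) < \<epsilon>"
proof -
  have \<epsilon>3: "\<epsilon> / 3 > 0" using \<open>\<epsilon> > 0\<close> by simp
  obtain \<delta>1 where \<delta>1: "\<delta>1 > 0" "\<And>z. z \<in> S - Q \<Longrightarrow> dist z x < \<delta>1 \<Longrightarrow> dist (h z) (h x) < \<epsilon> / 3"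
    using h_remainder(2) x \<epsilon>3 unfolding continuous_on_iff by blast
  define F where "F = {a \<in> Q. \<epsilon> / 3 \<le> dist (h (A.nearest a)) (B.nearest (\<sigma> a))}
    \<union> (\<sigma> -` {b \<in> Q'. \<epsilon> / 3 \<le> dist b (B.nearest b)} \<inter> Q)"
  have "inj_on \<sigma> Q" using \<sigma> by (simp add: compatible_matching_def bij_betw_def)
  moreover have "finite {b \<in> Q'. \<epsilon> / 3 \<le> dist b (B.nearest b)}"
    by (rule B.finite_far_from_remainder[OF \<epsilon>3])
  moreover have "finite {a \<in> Q. \<epsilon> / 3 \<le> dist (h (A.nearest a)) (B.nearest (\<sigma> a))}"
    using \<sigma> \<epsilon>3 unfolding compatible_matching_def by blast
  ultimately have "finite F" unfolding F_def by (intro finite_UnI finite_vimage_IntI)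
  then obtain d where d: "d > 0" "\<And>y. y \<in> F \<Longrightarrow> d \<le> dist x y"
    using finite_set_avoid[of F x] x by (force simp: F_def)
  show ?thesis
  proof
    show "min (\<delta>1 / 2) d > 0" using \<delta>1(1) d(1) by simp
    fix y assume y: "y \<in> Q" "dist y x < min (\<delta>1 / 2) d"
    then have "y \<notin> F" using d(2) by (force simp: dist_commute)
    then have far1: "dist (h (A.nearest y)) (B.nearest (\<sigma> y)) < \<epsilon> / 3"
      and far2: "dist (\<sigma> y) (B.nearest (\<sigma> y)) < \<epsilon> / 3"
      using y(1) \<sigma> bij_betw_apply[of \<sigma> Q Q'] by (auto simp: F_def compatible_matching_def)
    have "dist (A.nearest y) x < \<delta>1" using A.dist_nearest_le[OF x, of y] y(2) by simp
    then have near: "dist (h (A.nearest y)) (h x) < \<epsilon> / 3" using \<delta>1(2) A.nearest(1) by blast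
    have "dist (\<sigma> y) (h x)
        \<le> dist (\<sigma> y) (B.nearest (\<sigma> y)) + dist (B.nearest (\<sigma> y)) (h (A.nearest y)) + dist (h (A.nearest y)) (h x)"
      by (meson add_mono dist_triangle order_trans order_refl)
    then show "dist (\<sigma> y) (h x) < \<epsilon>" using far1 far2 near by (simp add: dist_commute)
  qed
qed

definition extension :: "('m \<Rightarrow> 'n) \<Rightarrow> 'm \<Rightarrow> 'n" where
  "extension \<sigma> x = (if x \<in> Q then \<sigma> x else h x)"

lemma continuous_on_extension:
  assumes \<sigma>: "compatible_matching \<sigma>"
  shows "continuous_on S (extension \<sigma>)"
  unfolding continuous_on_iff
proof (intro ballI allI impI)
  fix x and \<epsilon> :: real assume x: "x \<in> S" and \<epsilon>: "\<epsilon> > 0"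
  show "\<exists>\<delta>>0. \<forall>y\<in>S. dist y x < \<delta> \<longrightarrow> dist (extension \<sigma> y) (extension \<sigma> x) < \<epsilon>"
  proof (cases "x \<in> Q")
    case True
    then obtain e where "e > 0" "\<forall>y\<in>S. dist y x < e \<longrightarrow> y = x" using A.isolated by blast
    then show ?thesis using \<epsilon> by (metis dist_self)
  next
    case False
    then have x: "x \<in> S - Q" using x by blast
    obtain \<delta>1 where \<delta>1: "\<delta>1 > 0" "\<And>z. z \<in> S - Q \<Longrightarrow> dist z x < \<delta>1 \<Longrightarrow> dist (h z) (h x) < \<epsilon>"
      using h_remainder(2) x \<epsilon> unfolding continuous_on_iff by blast
    obtain \<delta>2 where \<delta>2: "\<delta>2 > 0" "\<And>y. y \<in> Q \<Longrightarrow> dist y x < \<delta>2 \<Longrightarrow> dist (\<sigma> y) (h x) < \<epsilon>"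
      using compatible_matching_near_remainder[OF \<sigma> x \<epsilon>] by blast
    show ?thesis
    proof (intro exI[of _ "min \<delta>1 \<delta>2"] conjI ballI impI)
      show "min \<delta>1 \<delta>2 > 0" using \<delta>1(1) \<delta>2(1) by simp
      fix y assume "y \<in> S" "dist y x < min \<delta>1 \<delta>2"
      then show "dist (extension \<sigma> y) (extension \<sigma> x) < \<epsilon>"
        using x \<delta>1(2)[of y] \<delta>2(2)[of y] by (cases "y \<in> Q") (simp_all add: extension_def)
    qed
  qed
qed

lemma homeomorphism_extension:
  assumes "a0 \<in> Q" "a0' \<in> Q'"
  obtains g g' where "homeomorphism S S' g g'" "g ` Q = Q'" "g a0 = a0'"
proof -
  obtain \<sigma> where \<sigma>: "compatible_matching \<sigma>" "\<sigma> a0 = a0'"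
    using exists_compatible_matching[OF assms] by blast
  then have bij: "bij_betw \<sigma> Q Q'" by (simp add: compatible_matching_def)
  have "extension \<sigma> ` (S - Q) = h ` (S - Q)" by (rule image_cong) (simp_all add: extension_def)
  then have on_remainder: "extension \<sigma> ` (S - Q) = S' - Q'" using h_remainder(1) by simp
  have "extension \<sigma> ` Q = \<sigma> ` Q" by (rule image_cong) (simp_all add: extension_def)
  then have on_peripheral: "extension \<sigma> ` Q = Q'" using bij by (simp add: bij_betw_def)
  have S: "S = (S - Q) \<union> Q" "S' = (S' - Q') \<union> Q'"
    using A.peripheral_subset B.peripheral_subset by auto
  then have "extension \<sigma> ` S = S'" using on_remainder on_peripheral by (metis image_Un)
  moreover have "inj_on (extension \<sigma>) S"
  proof -
    have "inj_on h (S - Q)" using h_remainder(4) by (metis inj_on_inverseI)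
    then have "inj_on (extension \<sigma>) (S - Q)" by (auto simp: extension_def inj_on_def)
    moreover have "inj_on (extension \<sigma>) Q"
      using bij by (auto simp: extension_def inj_on_def bij_betw_def)
    moreover have "extension \<sigma> ` (S - Q) \<inter> extension \<sigma> ` Q = {}"
      using on_remainder on_peripheral by blast
    moreover have "(S - Q) - Q = S - Q" "Q - (S - Q) = Q" by auto
    ultimately have "inj_on (extension \<sigma>) ((S - Q) \<union> Q)" unfolding inj_on_Un by simp
    then show ?thesis using S(1) by simp
  qed
  ultimately obtain g' where "homeomorphism S S' (extension \<sigma>) g'"
    using homeomorphism_compact[OF A.compact continuous_on_extension[OF \<sigma>(1)]] by blast
  moreover have "extension \<sigma> a0 = a0'" using \<sigma>(2) assms(1) by (simp add: extension_def)
  ultimately show ?thesis using that on_peripheral by blast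
qed

end

section \<open>Peripheral extensions\<close>

lemma homeomorphism_iff_homeomorphic_maps:
  "homeomorphism S T g g' \<longleftrightarrow> homeomorphic_maps (top_of_set S) (top_of_set T) g g'"
  unfolding homeomorphism_def homeomorphic_maps_def continuous_map_subtopology_eu
  by (auto simp: Pi_iff image_subset_iff) (metis image_eqI)+

text \<open>Distances to the points of a countable dense set separate points, and compactness
  makes the resulting injection into \<open>\<real>\<^sup>\<nat>\<close> an embedding.\<close>
lemma compact_metrizable_embedding:
  fixes Y :: "'a topology"
  assumes "compact_space Y" "metrizable_space Y"
    and D: "countable D" "D \<noteq> {}" "D \<subseteq> topspace Y" "Y closure_of D = topspace Y"
  obtains e :: "'a \<Rightarrow> nat \<Rightarrow> real" where "embedding_map Y euclidean e"
proof -
  obtain M d where md: "Metric_space M d" "Y = Metric_space.mtopology M d"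
    using assms(2) unfolding metrizable_space_def by blast
  interpret Metric_space M d by (rule md(1))
  have M: "topspace Y = M" using md(2) by simp
  define p where "p = from_nat_into D"
  have p: "p n \<in> M" for n using from_nat_into[OF D(2)] D(3) M by (auto simp: p_def)
  define e where "e y = (\<lambda>n. d y (p n))" for y
  have "continuous_map Y euclideanreal (\<lambda>y. d y (p n))" for n
  proof -
    have "continuous_map Y euclideanreal (\<lambda>y. mdist (metric (M, d)) (id y) ((\<lambda>_. p n) y))"
      by (intro continuous_map_mdist) (auto simp: md(2) p)
    then show ?thesis by simp
  qed
  then have "continuous_map Y euclidean e"
    unfolding euclidean_product_topology[symmetric] continuous_map_componentwise_UNIV e_def
    by simp
  moreover have "inj_on e (topspace Y)"
  proof (rule inj_onI)
    fix y z assume y: "y \<in> topspace Y" and z: "z \<in> topspace Y" and ez: "e y = e z"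
    have same: "d y q = d z q" if q: "q \<in> D" for q
    proof -
      obtain n where "q = p n" using q range_from_nat_into[OF D(2,1)] by (auto simp: p_def)
      then show ?thesis using fun_cong[OF ez, of n] by (simp add: e_def)
    qed
    show "y = z"
    proof (rule ccontr)
      assume "y \<noteq> z"
      then have "d y z / 2 > 0" using y z M by simp
      moreover have "y \<in> mtopology closure_of D" using y D(4) md(2) by simp
      then have "\<forall>r>0. \<exists>q\<in>D. d y q < r" by (auto simp: metric_closure_of in_mball)
      ultimately obtain q where q: "q \<in> D" "d y q < d y z / 2" by blast
      have "d y z \<le> d y q + d q z" using y z q D(3) M triangle by auto
      then show False using q same[of q] commute[of q z] by linarith
    qed
  qed
  ultimately have "embedding_map Y euclidean e"
    by (intro continuous_imp_embedding_map) (simp_all add: assms(1))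
  then show ?thesis using that by blast
qed

lemma peripheral_extension_embedding:
  fixes Y :: "'a topology"
  assumes pe: "peripheral_extension X Y P" and X: "topspace X \<noteq> {}"
  obtains e :: "'a \<Rightarrow> nat \<Rightarrow> real" where
    "homeomorphic_map Y (top_of_set (e ` topspace Y)) e"
    "peripheral_compactum (e ` topspace Y) (e ` P)"
    "top_of_set (e ` topspace Y - e ` P) homeomorphic_space X"
proof -
  have PY: "P \<subseteq> topspace Y" and "P \<noteq> {}" "compact_space Y" "metrizable_space Y"
    and countable: "countable P" and closure: "Y closure_of P = topspace Y"
    and discrete: "subtopology Y P = discrete_topology P" and "openin Y P"
    and remainder_X: "subtopology Y (topspace Y - P) homeomorphic_space X"
    using pe unfolding peripheral_extension_def by auto
  then obtain e :: "'a \<Rightarrow> nat \<Rightarrow> real" where "embedding_map Y euclidean e"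
    using compact_metrizable_embedding by metis
  define S where "S = e ` topspace Y"
  have hom: "homeomorphic_map Y (top_of_set S) e"
    using \<open>embedding_map Y euclidean e\<close> unfolding embedding_map_def S_def by simp
  have inj: "inj_on e (topspace Y)" using homeomorphic_imp_injective_map[OF hom] .
  have "compact_space (top_of_set S)"
    using homeomorphic_compact_space[OF homeomorphic_map_imp_homeomorphic_space[OF hom]]
      \<open>compact_space Y\<close> by blast
  then have "compact S" by (simp add: compact_space_def compactin_subtopology)
  have remainder: "e ` (topspace Y - P) = S - e ` P"
    using inj_on_image_set_diff[OF inj, of "topspace Y" P] PY unfolding S_def by auto
  have isolated: "\<exists>\<epsilon>>0. \<forall>y\<in>S. dist y q < \<epsilon> \<longrightarrow> y = q" if q: "q \<in> e ` P" for q
  proof -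
    obtain p where p: "p \<in> P" "q = e p" using q by blast
    have "openin (subtopology Y P) {p}" using discrete p(1) by simp
    then have "openin Y {p}" using \<open>openin Y P\<close> by (rule openin_trans_full)
    then have "openin (top_of_set S) {q}"
      using homeomorphic_map_openness[OF hom, of "{p}"] p PY by auto
    then obtain T where T: "open T" "{q} = S \<inter> T" by (auto simp: openin_open)
    then obtain \<epsilon> where "\<epsilon> > 0" "ball q \<epsilon> \<subseteq> T" using open_contains_ball by blast
    have "y = q" if "y \<in> S" "dist y q < \<epsilon>" for y
    proof -
      have "y \<in> S \<inter> T" using that \<open>ball q \<epsilon> \<subseteq> T\<close> by (auto simp: dist_commute)
      then show ?thesis using T(2) by blast
    qed
    then show ?thesis using \<open>\<epsilon> > 0\<close> by blast
  qed
  have dense: "S \<subseteq> closure (e ` P)"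
  proof -
    have "(top_of_set S) closure_of (e ` P) = e ` (Y closure_of P)"
      using homeomorphic_map_closure_of[OF hom PY] .
    also have "\<dots> = S" using closure S_def by simp
    finally have "S \<inter> closure (S \<inter> e ` P) = S" by (simp add: closure_of_subtopology)
    then show ?thesis by (metis closure_mono inf.cobounded2 inf.orderI le_inf_iff order_trans)
  qed
  have "e ` (topspace Y \<inter> (topspace Y - P)) = topspace (top_of_set S) \<inter> (S - e ` P)"
    using remainder by (simp add: Int_absorb1 Int_absorb2 Diff_subset)
  then have "homeomorphic_map (subtopology Y (topspace Y - P)) (subtopology (top_of_set S) (S - e ` P)) e"
    by (rule homeomorphic_map_subtopologies[OF hom])
  moreover have "subtopology (top_of_set S) (S - e ` P) = top_of_set (S - e ` P)"
    by (simp add: subtopology_subtopology Diff_subset inf.absorb2)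
  ultimately have "subtopology Y (topspace Y - P) homeomorphic_space top_of_set (S - e ` P)"
    using homeomorphic_map_imp_homeomorphic_space by fastforce
  then have "top_of_set (S - e ` P) homeomorphic_space subtopology Y (topspace Y - P)"
    by (subst homeomorphic_space_sym)
  moreover note remainder_X
  ultimately have rem_X: "top_of_set (S - e ` P) homeomorphic_space X"
    by (rule homeomorphic_space_trans)
  have "top_of_set (S - e ` P) \<noteq> trivial_topology"
    using X homeomorphic_empty_space[OF rem_X] by simp
  then have "S - e ` P \<noteq> {}" by (metis subtopology_empty_iff_trivial)
  have "peripheral_compactum S (e ` P)"
  proof
    show "compact S" by fact
    show "e ` P \<subseteq> S" using PY by (auto simp: S_def)
    show "\<And>q. q \<in> e ` P \<Longrightarrow> \<exists>\<epsilon>>0. \<forall>y\<in>S. dist y q < \<epsilon> \<longrightarrow> y = q" by (fact isolated)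
    show "S \<subseteq> closure (e ` P)" by fact
    show "countable (e ` P)" using countable by simp
    show "S - e ` P \<noteq> {}" by fact
  qed
  from hom this rem_X show ?thesis unfolding S_def by (rule that)
qed

lemma homeomorphic_map_image_Diff:
  assumes "homeomorphic_map X Y f" "A \<subseteq> topspace X"
  shows "f ` (topspace X - A) = topspace Y - f ` A"
  using inj_on_image_set_diff[OF homeomorphic_imp_injective_map[OF assms(1)] _ assms(2)]
    homeomorphic_imp_surjective_map[OF assms(1)] by simp

lemma peripheral_extension_homeomorphism:
  fixes Y :: "'a topology" and Y' :: "'b topology"
  assumes pe: "peripheral_extension X Y P" and pe': "peripheral_extension X Y' P'"
    and X: "topspace X \<noteq> {}" and p: "p \<in> P" and p': "p' \<in> P'"
  obtains f where "homeomorphic_map Y Y' f" "f ` P = P'"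
    "f ` (topspace Y - P) = topspace Y' - P'" "f p = p'"
proof -
  obtain e :: "'a \<Rightarrow> nat \<Rightarrow> real" where e: "homeomorphic_map Y (top_of_set (e ` topspace Y)) e"
    "peripheral_compactum (e ` topspace Y) (e ` P)"
    "top_of_set (e ` topspace Y - e ` P) homeomorphic_space X"
    using peripheral_extension_embedding[OF pe X] by blast
  obtain e' :: "'b \<Rightarrow> nat \<Rightarrow> real" where e': "homeomorphic_map Y' (top_of_set (e' ` topspace Y')) e'"
    "peripheral_compactum (e' ` topspace Y') (e' ` P')"
    "top_of_set (e' ` topspace Y' - e' ` P') homeomorphic_space X"
    using peripheral_extension_embedding[OF pe' X] by blast
  define S Q S' Q' where "S = e ` topspace Y" "Q = e ` P" "S' = e' ` topspace Y'" "Q' = e' ` P'"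
  have "top_of_set (S - Q) homeomorphic_space top_of_set (S' - Q')"
    using e(3) e'(3) homeomorphic_space_sym homeomorphic_space_trans
    unfolding S_Q_S'_Q'_def by blast
  then obtain h h' where "homeomorphism (S - Q) (S' - Q') h h'"
    unfolding homeomorphic_space_def homeomorphism_iff_homeomorphic_maps by blast
  then interpret peripheral_pair S Q S' Q' h h'
    using e(2) e'(2) unfolding S_Q_S'_Q'_def by (simp add: peripheral_pair_def peripheral_pair_axioms_def)
  obtain g g' where g: "homeomorphism S S' g g'" "g ` Q = Q'" "g (e p) = e' p'"
    using homeomorphism_extension p p' unfolding S_Q_S'_Q'_def by blast
  obtain e'' where e'': "homeomorphic_maps Y' (top_of_set S') e' e''"
    using e'(1) unfolding homeomorphic_map_maps S_Q_S'_Q'_def by blast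
  have PY: "P \<subseteq> topspace Y" "P' \<subseteq> topspace Y'"
    using pe pe' unfolding peripheral_extension_def by auto
  define f where "f = e'' \<circ> g \<circ> e"
  have f: "homeomorphic_map Y Y' f"
    unfolding f_def
    using e(1) g(1) e'' unfolding S_Q_S'_Q'_def homeomorphism_iff_homeomorphic_maps
    by (meson homeomorphic_map_compose homeomorphic_map_maps homeomorphic_maps_sym)
  have e''_e': "e'' (e' y) = y" if "y \<in> topspace Y'" for y
    using e'' that by (simp add: homeomorphic_maps_map)
  have "f ` P = e'' ` g ` Q" unfolding f_def S_Q_S'_Q'_def by (simp add: image_comp)
  also have "\<dots> = e'' ` e' ` P'" using g(2) unfolding S_Q_S'_Q'_def by simp
  also have "\<dots> = P'" using e''_e' PY(2) by (force simp: image_comp)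
  finally have fP: "f ` P = P'" .
  show ?thesis
  proof (rule that[OF f fP])
    show "f ` (topspace Y - P) = topspace Y' - P'"
      using homeomorphic_map_image_Diff[OF f PY(1)] fP by simp
    show "f p = p'" using g(3) e''_e' p' PY(2) by (auto simp: f_def)
  qed
qed

section \<open>Rooted trees\<close>

lemma successively_map_upt:
  assumes "\<And>i. a \<le> i \<Longrightarrow> Suc i < b \<Longrightarrow> P (f i) (f (Suc i))"
  shows "successively P (map f [a..<b])"
  unfolding successively_conv_nth
proof (intro allI impI)
  fix i assume "Suc i < length (map f [a..<b])"
  then have "Suc (a + i) < b" by simp
  then show "P (map f [a..<b] ! i) (map f [a..<b] ! Suc i)"
    using assms[of "a + i"] by (simp add: nth_upt)
qed

lemma last_agreement:
  fixes m :: nat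
  assumes "p1 0 = p2 0" "p1 m \<noteq> p2 m"
  obtains k where "k < m" "p1 k = p2 k" "\<And>i. k < i \<Longrightarrow> i \<le> m \<Longrightarrow> p1 i \<noteq> p2 i"
proof -
  define K where "K = {k. k \<le> m \<and> p1 k = p2 k}"
  have "finite K" "0 \<in> K" unfolding K_def using assms by auto
  then have "Max K \<in> K" "\<And>i. i \<in> K \<Longrightarrow> i \<le> Max K" by (auto intro: Max_in)
  then show ?thesis using that[of "Max K"] assms unfolding K_def
    by (metis (mono_tags, lifting) le_neq_implies_less mem_Collect_eq not_le)
qed

locale rooted_tree =
  fixes V :: "'v set" and E :: "('v \<times> 'v) set" and r :: 'v
  assumes tree: "is_tree V E" and root: "r \<in> V"
begin

lemma edges_subset: "E \<subseteq> V \<times> V" and sym: "(x, y) \<in> E \<Longrightarrow> (y, x) \<in> E"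
  and irrefl: "(x, x) \<notin> E" and connected: "x \<in> V \<Longrightarrow> y \<in> V \<Longrightarrow> (x, y) \<in> E\<^sup>*"
  and no_cycle: "\<not> (\<exists>xs. 3 \<le> length xs \<and> distinct xs \<and>
            (\<forall>i. Suc i < length xs \<longrightarrow> (xs ! i, xs ! Suc i) \<in> E) \<and> (last xs, hd xs) \<in> E)"
  using tree unfolding is_tree_def by blast+

definition depth :: "'v \<Rightarrow> nat" where
  "depth v = (LEAST n. (r, v) \<in> E ^^ n)"

lemma depth: "v \<in> V \<Longrightarrow> (r, v) \<in> E ^^ depth v"
proof -
  assume "v \<in> V"
  then have "\<exists>n. (r, v) \<in> E ^^ n" using connected[OF root] by (simp add: rtrancl_power)
  then show ?thesis unfolding depth_def by (rule LeastI_ex)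
qed

lemma depth_le: "(r, v) \<in> E ^^ n \<Longrightarrow> depth v \<le> n"
  unfolding depth_def by (rule Least_le)

lemma depth_root: "depth r = 0"
  using depth_le[of r 0] by simp

lemma depth_eq_0: "v \<in> V \<Longrightarrow> depth v = 0 \<Longrightarrow> v = r"
  using depth[of v] by simp

lemma depth_edge_le: "(u, w) \<in> E \<Longrightarrow> depth w \<le> Suc (depth u)"
proof -
  assume uw: "(u, w) \<in> E"
  then have "u \<in> V" using edges_subset by auto
  then have "(r, w) \<in> E ^^ Suc (depth u)" using relpow_Suc_I[OF depth uw] by simp
  then show ?thesis by (rule depth_le)
qed

definition geodesic :: "(nat \<Rightarrow> 'v) \<Rightarrow> nat \<Rightarrow> bool" where
  "geodesic p n \<longleftrightarrow> p 0 = r \<and> (\<forall>i<n. (p i, p (Suc i)) \<in> E) \<and> (\<forall>i\<le>n. depth (p i) = i)"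

lemma exists_geodesic:
  assumes "v \<in> V"
  obtains p where "geodesic p (depth v)" "p (depth v) = v"
proof -
  obtain p where p: "p 0 = r" "p (depth v) = v" "\<forall>i<depth v. (p i, p (Suc i)) \<in> E"
    using depth[OF assms] unfolding relpow_fun_conv by blast
  have "depth (p i) = i" if i: "i \<le> depth v" for i
  proof -
    have "(r, p i) \<in> E ^^ i" unfolding relpow_fun_conv
      using p i by (intro exI[of _ p]) auto
    then have le: "depth (p i) \<le> i" by (rule depth_le)
    have seg: "(p i, v) \<in> E ^^ (depth v - i)" unfolding relpow_fun_conv
      using p i by (intro exI[of _ "\<lambda>j. p (i + j)"]) auto
    have "p i \<in> V"
    proof (cases i)
      case 0 then show ?thesis using p root by simp
    next
      case (Suc j) then have "(p j, p i) \<in> E" using p(3) i by auto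
      then show ?thesis using edges_subset by auto
    qed
    then have "(r, v) \<in> E ^^ (depth (p i) + (depth v - i))" using depth seg relpow_add by blast
    then have "depth v \<le> depth (p i) + (depth v - i)" by (rule depth_le)
    then show ?thesis using le i by linarith
  qed
  then show ?thesis using that p unfolding geodesic_def by blast
qed

lemma distinct_geodesics_through_deeper_vertices:
  assumes p1: "geodesic p1 m" and p2: "geodesic p2 m"
    and dif: "\<And>i. k < i \<Longrightarrow> i \<le> m \<Longrightarrow> p1 i \<noteq> p2 i"
    and ws: "distinct ws" "\<And>w. w \<in> set ws \<Longrightarrow> m < depth w"
  shows "distinct (map p1 [k..<Suc m] @ ws @ rev (map p2 [Suc k..<Suc m]))"
proof -
  have depth1: "\<And>i. i \<le> m \<Longrightarrow> depth (p1 i) = i" and depth2: "\<And>i. i \<le> m \<Longrightarrow> depth (p2 i) = i"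
    using p1 p2 unfolding geodesic_def by auto
  have "inj_on p1 {..m}" by (rule inj_onI) (metis depth1 atMost_iff)
  then have "inj_on p1 (set [k..<Suc m])" by (rule inj_on_subset) auto
  moreover have "inj_on p2 {..m}" by (rule inj_onI) (metis depth2 atMost_iff)
  then have "inj_on p2 (set [Suc k..<Suc m])" by (rule inj_on_subset) auto
  ultimately have "distinct (map p1 [k..<Suc m])" "distinct (map p2 [Suc k..<Suc m])"
    by (simp_all add: distinct_map)
  moreover have "set (map p1 [k..<Suc m]) \<inter> set ws = {}" using depth1 ws(2) by fastforce
  moreover have "set (map p2 [Suc k..<Suc m]) \<inter> set ws = {}" using depth2 ws(2) by fastforce
  moreover have "set (map p1 [k..<Suc m]) \<inter> set (map p2 [Suc k..<Suc m]) = {}"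
  proof (rule ccontr)
    assume "set (map p1 [k..<Suc m]) \<inter> set (map p2 [Suc k..<Suc m]) \<noteq> {}"
    then obtain x where "x \<in> p1 ` {k..<Suc m}" "x \<in> p2 ` {Suc k..<Suc m}"
      unfolding set_map set_upt by blast
    then obtain i j where "i \<in> {k..<Suc m}" "j \<in> {Suc k..<Suc m}" "p1 i = p2 j" by (metis imageE)
    then have ij: "k \<le> i" "i \<le> m" "Suc k \<le> j" "j \<le> m" "p1 i = p2 j" by auto
    then have "i = j" using depth1 depth2 by metis
    then show False using dif ij by auto
  qed
  ultimately show ?thesis using ws(1) by auto
qed

text \<open>The cycle runs from the branch point \<open>p1 k = p2 k\<close> along \<open>p1\<close>, through \<open>ws\<close>, and back
  along \<open>p2\<close>.\<close>
lemma no_cycle_from_geodesics: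
  assumes p1: "geodesic p1 m" and p2: "geodesic p2 m"
    and km: "k < m" and pk: "p1 k = p2 k" and dif: "\<And>i. k < i \<Longrightarrow> i \<le> m \<Longrightarrow> p1 i \<noteq> p2 i"
    and ws: "distinct ws" "\<And>w. w \<in> set ws \<Longrightarrow> m < depth w"
    and ch: "successively (\<lambda>x y. (x, y) \<in> E) (p1 m # ws @ [p2 m])"
  shows False
proof -
  have walk1: "\<forall>i<m. (p1 i, p1 (Suc i)) \<in> E" and walk2: "\<forall>i<m. (p2 i, p2 (Suc i)) \<in> E"
    using p1 p2 unfolding geodesic_def by auto
  let ?E = "\<lambda>x y. (x, y) \<in> E"
  define A where "A = map p1 [k..<m]"
  define B where "B = p1 m # ws @ [p2 m]"
  define C where "C = rev (map p2 [Suc k..<m])"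
  define xs where "xs = A @ B @ C"
  have walk_A: "successively ?E A" unfolding A_def
    by (rule successively_map_upt) (use walk1 in auto)
  have walk_C: "successively ?E C" unfolding C_def successively_rev
    by (rule successively_map_upt) (use walk2 sym in auto)
  have "(p1 (m - 1), p1 m) \<in> E" "(p2 (m - 1), p2 m) \<in> E"
    using walk1 walk2 km by (metis Suc_pred' diff_less less_nat_zero_code not_gr_zero zero_less_one)+
  moreover have "A \<noteq> []" "last A = p1 (m - 1)" unfolding A_def using km by (simp_all add: last_map)
  ultimately have join_AB: "?E (last A) (hd B)" and join_BC: "C = [] \<or> ?E (last B) (hd C)"
  proof -
    show "?E (last A) (hd B)" using \<open>last A = p1 (m - 1)\<close> \<open>(p1 (m - 1), p1 m) \<in> E\<close> by (simp add: B_def)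
    show "C = [] \<or> ?E (last B) (hd C)"
    proof (cases "Suc k < m")
      case True
      then have "hd C = p2 (m - 1)" unfolding C_def by (simp add: hd_rev last_map)
      then show ?thesis using \<open>(p2 (m - 1), p2 m) \<in> E\<close> sym by (simp add: B_def)
    qed (simp add: C_def)
  qed
  have "successively ?E (B @ C)" unfolding successively_append_iff
    using ch walk_C join_BC by (simp add: B_def)
  then have walk: "successively ?E xs" unfolding xs_def
    using successively_append_iff[of ?E A "B @ C"] walk_A join_AB by (simp add: B_def)
  have "hd xs = p1 k" unfolding xs_def A_def using km by (simp add: upt_conv_Cons)
  moreover have "last xs = p2 (Suc k)"
  proof (cases "Suc k < m")
    case True then show ?thesis unfolding xs_def C_def by (simp add: last_rev upt_conv_Cons)
  next
    case False then have "m = Suc k" using km by simp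
    then show ?thesis unfolding xs_def C_def B_def by simp
  qed
  ultimately have close: "(last xs, hd xs) \<in> E" using walk2 km sym pk by auto
  have len: "3 \<le> length xs" unfolding xs_def A_def B_def C_def using km by simp
  have "xs = map p1 [k..<Suc m] @ ws @ rev (map p2 [Suc k..<Suc m])"
    unfolding xs_def A_def B_def C_def using km by simp
  then have "distinct xs" using distinct_geodesics_through_deeper_vertices[OF p1 p2 dif ws] by simp
  then show False using no_cycle len walk close unfolding successively_conv_nth by blast
qed

lemma no_cycle_through_deeper_vertices:
  assumes "x \<in> V" "y \<in> V" "x \<noteq> y" "depth x = depth y"
    and "distinct ws" "\<And>w. w \<in> set ws \<Longrightarrow> depth x < depth w"
    and "successively (\<lambda>a b. (a, b) \<in> E) (x # ws @ [y])"
  shows False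
proof -
  obtain p1 where p1: "geodesic p1 (depth x)" "p1 (depth x) = x"
    using exists_geodesic[OF assms(1)] .
  obtain p2 where p2: "geodesic p2 (depth x)" "p2 (depth x) = y"
    using exists_geodesic[OF assms(2)] unfolding assms(4)[symmetric] by blast
  have "p1 0 = p2 0" using p1(1) p2(1) by (simp add: geodesic_def)
  then obtain k where k: "k < depth x" "p1 k = p2 k" "\<And>i. k < i \<Longrightarrow> i \<le> depth x \<Longrightarrow> p1 i \<noteq> p2 i"
    using last_agreement p1(2) p2(2) assms(3) by metis
  show False
    by (rule no_cycle_from_geodesics[OF p1(1) p2(1) k]) (use assms(5-7) p1(2) p2(2) in auto)
qed

lemma edge_depth_neq:
  assumes "(a, b) \<in> E" shows "depth a \<noteq> depth b"
proof
  assume "depth a = depth b"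
  moreover have "a \<in> V" "b \<in> V" "a \<noteq> b" using assms edges_subset irrefl by auto
  ultimately show False
    using no_cycle_through_deeper_vertices[of a b "[]"] assms by simp
qed

lemma lower_neighbour_unique:
  assumes "(v, u1) \<in> E" "(v, u2) \<in> E" "depth u1 < depth v" "depth u2 < depth v"
  shows "u1 = u2"
proof (rule ccontr)
  assume "u1 \<noteq> u2"
  moreover have "depth v = Suc (depth u1)" "depth v = Suc (depth u2)"
    using depth_edge_le[OF assms(1)] depth_edge_le[OF sym[OF assms(1)]] assms(3)
      depth_edge_le[OF assms(2)] depth_edge_le[OF sym[OF assms(2)]] assms(4) by linarith+
  ultimately show False
    using no_cycle_through_deeper_vertices[of u1 u2 "[v]"] assms(1,2) edges_subset sym by fastforce
qed

definition parent :: "'v \<Rightarrow> 'v" where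
  "parent v = (SOME u. (v, u) \<in> E \<and> depth u < depth v)"

lemma parent:
  assumes "v \<in> V" "v \<noteq> r"
  shows "(v, parent v) \<in> E" "Suc (depth (parent v)) = depth v" "parent v \<in> V"
proof -
  have "depth v \<noteq> 0" using depth_eq_0 assms by blast
  obtain p where p: "geodesic p (depth v)" "p (depth v) = v"
    using exists_geodesic[OF assms(1)] .
  have dv: "Suc (depth v - 1) = depth v" using \<open>depth v \<noteq> 0\<close> by simp
  have "(p (depth v - 1), p (Suc (depth v - 1))) \<in> E" "depth (p (depth v - 1)) = depth v - 1"
    using p(1) \<open>depth v \<noteq> 0\<close> unfolding geodesic_def by (simp_all del: Suc_pred)
  then have "(p (depth v - 1), v) \<in> E" "depth (p (depth v - 1)) < depth v"
    unfolding dv p(2) using \<open>depth v \<noteq> 0\<close> by simp_all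
  then have "\<exists>u. (v, u) \<in> E \<and> depth u < depth v" using sym by blast
  then have pp: "(v, parent v) \<in> E \<and> depth (parent v) < depth v" unfolding parent_def by (rule someI_ex)
  then show "(v, parent v) \<in> E" by simp
  show "Suc (depth (parent v)) = depth v" using pp depth_edge_le[of "parent v" v] sym by force
  show "parent v \<in> V" using pp edges_subset by auto
qed

lemma parent_unique: "(v, u) \<in> E \<Longrightarrow> depth u < depth v \<Longrightarrow> u = parent v"
proof -
  assume vu: "(v, u) \<in> E" "depth u < depth v"
  then have "v \<in> V" "v \<noteq> r" using edges_subset depth_root by auto
  then show ?thesis using lower_neighbour_unique[OF vu(1) parent(1)] vu parent(2) by force
qed

lemma edge_cases:
  assumes "(s, t) \<in> E"
  shows "(s \<noteq> r \<and> t = parent s \<and> depth s = Suc (depth t)) \<or>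
    (t \<noteq> r \<and> s = parent t \<and> depth t = Suc (depth s))"
proof -
  have "depth s \<noteq> depth t" using edge_depth_neq[OF assms] .
  moreover have "depth t \<le> Suc (depth s)" "depth s \<le> Suc (depth t)"
    using depth_edge_le assms sym by blast+
  ultimately have "depth s = Suc (depth t) \<or> depth t = Suc (depth s)" by linarith
  then show ?thesis
  proof
    assume d: "depth s = Suc (depth t)"
    then show ?thesis using parent_unique[OF assms] depth_root by auto
  next
    assume d: "depth t = Suc (depth s)"
    then show ?thesis using parent_unique[OF sym[OF assms]] depth_root by auto
  qed
qed

end

section \<open>Isomorphism of complete tree systems\<close>

locale tree_system_pair = rooted_tree V E r for V :: "'v set" and E r +
  fixes X :: "'c topology"
    and Xdd :: "'v \<Rightarrow> 'a topology" and P :: "'v \<Rightarrow> 'a set" and b :: "'v \<Rightarrow> 'v \<times> 'v \<Rightarrow> 'a"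
    and Xdd' :: "'v \<Rightarrow> 'b topology" and P' :: "'v \<Rightarrow> 'b set" and b' :: "'v \<Rightarrow> 'v \<times> 'v \<Rightarrow> 'b"
  assumes nonempty: "topspace X \<noteq> {}"
    and system: "tree_system V E X Xdd P b" and system': "tree_system V E X Xdd' P' b'"
begin

lemma peripheral: "t \<in> V \<Longrightarrow> peripheral_extension X (Xdd t) (P t)"
  and peripheral': "t \<in> V \<Longrightarrow> peripheral_extension X (Xdd' t) (P' t)"
  and labels: "t \<in> V \<Longrightarrow> bij_betw (b t) (out_edges E t) (P t)"
  and labels': "t \<in> V \<Longrightarrow> bij_betw (b' t) (out_edges E t) (P' t)"
  using system system' unfolding tree_system_def by blast+

lemma out_edgesI: "(t, s) \<in> E \<Longrightarrow> (t, s) \<in> out_edges E t"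
  by (simp add: out_edges_def)

lemma label_inj: "t \<in> V \<Longrightarrow> (t, s) \<in> E \<Longrightarrow> (t, s') \<in> E \<Longrightarrow> b t (t, s) = b t (t, s') \<Longrightarrow> s = s'"
  using bij_betw_imp_inj_on[OF labels] out_edgesI by (metis inj_onD prod.inject)

lemma label_inj': "t \<in> V \<Longrightarrow> (t, s) \<in> E \<Longrightarrow> (t, s') \<in> E \<Longrightarrow> b' t (t, s) = b' t (t, s') \<Longrightarrow> s = s'"
  using bij_betw_imp_inj_on[OF labels'] out_edgesI by (metis inj_onD prod.inject)

definition local_homeo :: "'v \<Rightarrow> 'v \<Rightarrow> ('a \<Rightarrow> 'b) \<Rightarrow> bool" where
  "local_homeo t t' f \<longleftrightarrow> t' \<in> V \<and> homeomorphic_map (Xdd t) (Xdd' t') f \<and> f ` P t = P' t' \<and>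
     f ` (topspace (Xdd t) - P t) = topspace (Xdd' t') - P' t'"

definition homeo_between :: "'v \<Rightarrow> 'v \<Rightarrow> 'a \<Rightarrow> 'b \<Rightarrow> 'a \<Rightarrow> 'b" where
  "homeo_between t t' p p' = (SOME f. local_homeo t t' f \<and> f p = p')"

lemma homeo_between:
  assumes "t \<in> V" "t' \<in> V" "p \<in> P t" "p' \<in> P' t'"
  shows "local_homeo t t' (homeo_between t t' p p')" "homeo_between t t' p p' p = p'"
proof -
  have "\<exists>f. local_homeo t t' f \<and> f p = p'"
    using peripheral_extension_homeomorphism[OF peripheral[OF assms(1)] peripheral'[OF assms(2)]
        nonempty assms(3,4)] assms(2)
    unfolding local_homeo_def by metis
  then show "local_homeo t t' (homeo_between t t' p p')" "homeo_between t t' p p' p = p'"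
    unfolding homeo_between_def by (metis (mono_tags, lifting) someI_ex)+
qed

text \<open>The neighbour of \<open>t'\<close> whose edge label corresponds under \<open>f\<close> to the label of the edge
  \<open>(u, v)\<close>.\<close>
definition edge_image :: "'v \<Rightarrow> ('a \<Rightarrow> 'b) \<Rightarrow> 'v \<Rightarrow> 'v \<Rightarrow> 'v" where
  "edge_image t' f u v = snd (inv_into (out_edges E t') (b' t') (f (b u (u, v))))"

lemma edge_image:
  assumes "u \<in> V" "local_homeo u t' f" "(u, v) \<in> E"
  shows "(t', edge_image t' f u v) \<in> E" "b' t' (t', edge_image t' f u v) = f (b u (u, v))"
proof -
  have t': "t' \<in> V" and "f ` P u = P' t'" using assms(2) by (auto simp: local_homeo_def)
  then have "f (b u (u, v)) \<in> b' t' ` out_edges E t'"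
    using bij_betw_apply[OF labels[OF assms(1)] out_edgesI[OF assms(3)]]
      bij_betw_imp_surj_on[OF labels'[OF t']] by blast
  define e where "e = inv_into (out_edges E t') (b' t') (f (b u (u, v)))"
  have e: "e \<in> out_edges E t'" "b' t' e = f (b u (u, v))"
    unfolding e_def using \<open>f (b u (u, v)) \<in> _\<close> by (simp_all add: inv_into_into f_inv_into_f)
  have "edge_image t' f u v = snd e" unfolding edge_image_def e_def ..
  then have "(t', edge_image t' f u v) = e" using e(1) by (auto simp: out_edges_def)
  then show "(t', edge_image t' f u v) \<in> E" "b' t' (t', edge_image t' f u v) = f (b u (u, v))"
    using e by (simp_all add: out_edges_def)
qed

lemma mapped_label_inj:
  assumes "u \<in> V" "local_homeo u t' f" "(u, v) \<in> E" "(u, w) \<in> E"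
    and "f (b u (u, v)) = f (b u (u, w))"
  shows "v = w"
proof -
  have "inj_on f (topspace (Xdd u))"
    using assms(2) homeomorphic_imp_injective_map by (auto simp: local_homeo_def)
  moreover have "P u \<subseteq> topspace (Xdd u)"
    using peripheral[OF assms(1)] by (simp add: peripheral_extension_def)
  moreover have "b u (u, v) \<in> P u" "b u (u, w) \<in> P u"
    using bij_betw_apply[OF labels[OF assms(1)]] out_edgesI assms(3,4) by blast+
  ultimately have "b u (u, v) = b u (u, w)" using assms(5) by (meson inj_onD subsetD)
  then show ?thesis using label_inj assms by blast
qed

definition root_point :: 'a where "root_point = (SOME p. p \<in> P r)"
definition root_point' :: 'b where "root_point' = (SOME p. p \<in> P' r)"

lemma root_points: "root_point \<in> P r" "root_point' \<in> P' r"
proof -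
  have "infinite (P r)" "infinite (P' r)"
    using peripheral[OF root] peripheral'[OF root] by (simp_all add: peripheral_extension_def)
  then have "\<exists>p. p \<in> P r" "\<exists>p. p \<in> P' r" by (metis ex_in_conv finite.emptyI)+
  then show "root_point \<in> P r" "root_point' \<in> P' r"
    unfolding root_point_def root_point'_def by (auto intro: someI_ex)
qed

text \<open>The isomorphism is built outwards from the root: the image of a vertex \<open>v\<close> is determined
  by the homeomorphism already chosen at its parent \<open>u\<close>, and the homeomorphism at \<open>v\<close> is then
  chosen to send the label of \<open>(v, u)\<close> to the label of the image edge.\<close>
primrec build :: "nat \<Rightarrow> 'v \<Rightarrow> 'v \<times> ('a \<Rightarrow> 'b)" where
  "build 0 v = (r, homeo_between r r root_point root_point')"
| "build (Suc n) v =
     (let u = parent v; t' = fst (build n u); t = edge_image t' (snd (build n u)) u v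
      in (t, homeo_between v t (b v (v, u)) (b' t (t, t'))))"

definition tree_map :: "'v \<Rightarrow> 'v" where "tree_map v = fst (build (depth v) v)"
definition space_map :: "'v \<Rightarrow> 'a \<Rightarrow> 'b" where "space_map v = snd (build (depth v) v)"

lemma tree_map_root: "tree_map r = r" "space_map r = homeo_between r r root_point root_point'"
  unfolding tree_map_def space_map_def depth_root by simp_all

lemma tree_map_step:
  assumes "v \<in> V" "v \<noteq> r"
  shows "tree_map v = edge_image (tree_map (parent v)) (space_map (parent v)) (parent v) v"
    "space_map v = homeo_between v (tree_map v) (b v (v, parent v))
       (b' (tree_map v) (tree_map v, tree_map (parent v)))"
proof -
  have d: "depth v = Suc (depth (parent v))" using parent(2)[OF assms] by simp
  show "tree_map v = edge_image (tree_map (parent v)) (space_map (parent v)) (parent v) v"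
    "space_map v = homeo_between v (tree_map v) (b v (v, parent v))
       (b' (tree_map v) (tree_map v, tree_map (parent v)))"
    unfolding tree_map_def space_map_def d by (simp_all add: Let_def)
qed

definition compatible_at :: "'v \<Rightarrow> bool" where
  "compatible_at v \<longleftrightarrow> local_homeo v (tree_map v) (space_map v) \<and> depth (tree_map v) = depth v \<and>
     (v \<noteq> r \<longrightarrow> parent (tree_map v) = tree_map (parent v) \<and>
        space_map v (b v (v, parent v)) = b' (tree_map v) (tree_map v, tree_map (parent v)))"

lemma compatible_at_root: "compatible_at r"
  using homeo_between(1)[OF root root root_points] tree_map_root depth_root
  by (simp add: compatible_at_def)

lemma compatible_at_child:
  assumes v: "v \<in> V" "v \<noteq> r" and u: "compatible_at (parent v)"
  shows "compatible_at v"
proof -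
  define u where "u = parent v"
  have uV: "u \<in> V" and vu: "(v, u) \<in> E" and du: "depth v = Suc (depth u)"
    using parent[OF v] by (auto simp: u_def)
  have hu: "local_homeo u (tree_map u) (space_map u)" and dtu: "depth (tree_map u) = depth u"
    using u by (simp_all add: compatible_at_def u_def)
  have tv: "tree_map v = edge_image (tree_map u) (space_map u) u v"
    using tree_map_step(1)[OF v] by (simp add: u_def)
  have edge: "(tree_map u, tree_map v) \<in> E"
    and label: "b' (tree_map u) (tree_map u, tree_map v) = space_map u (b u (u, v))"
    using edge_image[OF uV hu sym[OF vu]] by (simp_all add: tv)
  have tvV: "tree_map v \<in> V" using edge edges_subset by auto
  have "depth (tree_map v) = depth v \<and> parent (tree_map v) = tree_map u"
    using edge_cases[OF edge]
  proof
    assume c: "tree_map u \<noteq> r \<and> tree_map v = parent (tree_map u) \<and> depth (tree_map u) = Suc (depth (tree_map v))"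
    then have ur: "u \<noteq> r" using tree_map_root by auto
    then have "space_map u (b u (u, parent u)) = space_map u (b u (u, v))"
      using u c label by (simp add: compatible_at_def u_def)
    then have "v = parent u" using mapped_label_inj[OF uV hu parent(1)[OF uV ur] sym[OF vu]] by simp
    then show ?thesis using parent(2)[OF uV ur] du by simp
  next
    assume "tree_map v \<noteq> r \<and> tree_map u = parent (tree_map v) \<and> depth (tree_map v) = Suc (depth (tree_map u))"
    then show ?thesis using dtu du by simp
  qed
  moreover have "b v (v, u) \<in> P v" "b' (tree_map v) (tree_map v, tree_map u) \<in> P' (tree_map v)"
    using bij_betw_apply[OF labels[OF v(1)] out_edgesI[OF vu]]
      bij_betw_apply[OF labels'[OF tvV] out_edgesI[OF sym[OF edge]]] by simp_all
  ultimately show ?thesis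
    using homeo_between[OF v(1) tvV] tree_map_step(2)[OF v] v(2)
    by (simp add: compatible_at_def u_def)
qed

lemma compatible_at: "v \<in> V \<Longrightarrow> compatible_at v"
proof (induction "depth v" arbitrary: v)
  case 0
  then show ?case using depth_eq_0 compatible_at_root by metis
next
  case (Suc n)
  then have "v \<noteq> r" using depth_root by auto
  then show ?case
    using Suc parent[OF Suc.prems] compatible_at_child by simp
qed

lemma compatible_atD:
  assumes "v \<in> V"
  shows "local_homeo v (tree_map v) (space_map v)" "tree_map v \<in> V" "depth (tree_map v) = depth v"
    "v \<noteq> r \<Longrightarrow> parent (tree_map v) = tree_map (parent v)"
    "v \<noteq> r \<Longrightarrow> space_map v (b v (v, parent v)) = b' (tree_map v) (tree_map v, tree_map (parent v))"
  using compatible_at[OF assms] by (auto simp: compatible_at_def local_homeo_def)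

lemma tree_map_edge_to_parent:
  assumes "v \<in> V" "v \<noteq> r"
  shows "(tree_map (parent v), tree_map v) \<in> E"
    "b' (tree_map (parent v)) (tree_map (parent v), tree_map v) = space_map (parent v) (b (parent v) (parent v, v))"
  using edge_image[OF parent(3)[OF assms] compatible_atD(1)[OF parent(3)[OF assms]] sym[OF parent(1)[OF assms]]]
  by (simp_all add: tree_map_step(1)[OF assms])

lemma tree_map_edge:
  assumes "t \<in> V" "(t, s) \<in> E"
  shows "(tree_map t, tree_map s) \<in> E" "b' (tree_map t) (tree_map t, tree_map s) = space_map t (b t (t, s))"
proof -
  have "(tree_map t, tree_map s) \<in> E \<and> b' (tree_map t) (tree_map t, tree_map s) = space_map t (b t (t, s))"
    using edge_cases[OF assms(2)]
  proof
    assume "t \<noteq> r \<and> s = parent t \<and> depth t = Suc (depth s)"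
    then show ?thesis
      using tree_map_edge_to_parent(1)[OF assms(1)] compatible_atD(5)[OF assms(1)] sym by auto
  next
    assume "s \<noteq> r \<and> t = parent s \<and> depth s = Suc (depth t)"
    moreover have "s \<in> V" using assms(2) edges_subset by auto
    ultimately show ?thesis using tree_map_edge_to_parent by auto
  qed
  then show "(tree_map t, tree_map s) \<in> E" "b' (tree_map t) (tree_map t, tree_map s) = space_map t (b t (t, s))"
    by blast+
qed

lemma tree_map_neighbour:
  assumes "s \<in> V" "(tree_map s, x) \<in> E"
  obtains y where "(s, y) \<in> E" "tree_map y = x"
proof -
  have "b' (tree_map s) (tree_map s, x) \<in> P' (tree_map s)"
    using bij_betw_apply[OF labels'[OF compatible_atD(2)[OF assms(1)]] out_edgesI[OF assms(2)]] .
  also have "\<dots> = space_map s ` b s ` out_edges E s"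
    using compatible_atD(1)[OF assms(1)] bij_betw_imp_surj_on[OF labels[OF assms(1)]]
    by (simp add: local_homeo_def)
  finally obtain y where y: "(s, y) \<in> E" "b' (tree_map s) (tree_map s, x) = space_map s (b s (s, y))"
    by (auto simp: out_edges_def)
  then have "b' (tree_map s) (tree_map s, x) = b' (tree_map s) (tree_map s, tree_map y)"
    using tree_map_edge(2)[OF assms(1)] by simp
  then have "tree_map y = x"
    using label_inj'[OF compatible_atD(2)[OF assms(1)] tree_map_edge(1)[OF assms(1) y(1)] assms(2)] by simp
  then show ?thesis using that y(1) by blast
qed

lemma tree_map_inj: "inj_on tree_map V"
proof -
  have "v = w" if "v \<in> V" "w \<in> V" "tree_map v = tree_map w" for v w
    using that
  proof (induction "depth v" arbitrary: v w)
    case 0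
    then have "depth w = 0" using compatible_atD(3) by metis
    then show ?case using 0 depth_eq_0 by metis
  next
    case (Suc n)
    then have "depth w = Suc n" using compatible_atD(3) by metis
    then have vw: "v \<noteq> r" "w \<noteq> r" using Suc.hyps(2) depth_root by auto
    have "tree_map (parent v) = tree_map (parent w)"
      using compatible_atD(4) Suc.prems vw by metis
    moreover have "depth (parent v) = n" using parent(2)[OF Suc.prems(1) vw(1)] Suc.hyps(2) by simp
    ultimately have same: "parent v = parent w"
      using Suc.hyps(1) parent(3)[OF Suc.prems(1) vw(1)] parent(3)[OF Suc.prems(2) vw(2)] by blast
    define u where "u = parent v"
    have u: "u \<in> V" "(u, v) \<in> E" "(u, w) \<in> E"
      using parent[OF Suc.prems(1) vw(1)] parent[OF Suc.prems(2) vw(2)] sym same by (auto simp: u_def)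
    have "space_map u (b u (u, v)) = space_map u (b u (u, w))"
      using tree_map_edge(2)[OF u(1) u(2)] tree_map_edge(2)[OF u(1) u(3)] Suc.prems(3) by simp
    then show ?case using mapped_label_inj[OF u(1) compatible_atD(1)[OF u(1)] u(2,3)] by simp
  qed
  then show ?thesis by (rule inj_onI)
qed

lemma tree_map_surj: "tree_map ` V = V"
proof
  show "tree_map ` V \<subseteq> V" using compatible_atD(2) by blast
  have "w \<in> tree_map ` V" if "w \<in> V" for w
    using that
  proof (induction "depth w" arbitrary: w)
    case 0
    then show ?case using depth_eq_0 tree_map_root root by (metis image_eqI)
  next
    case (Suc n)
    then have w: "w \<noteq> r" using depth_root by auto
    then obtain u where u: "u \<in> V" "tree_map u = parent w"
      using Suc parent[OF Suc.prems w] by (metis Suc_inject imageE)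
    then obtain y where "(u, y) \<in> E" "tree_map y = w"
      using tree_map_neighbour[OF u(1)] sym[OF parent(1)[OF Suc.prems w]] by metis
    then show ?case using edges_subset by blast
  qed
  then show "V \<subseteq> tree_map ` V" by blast
qed

lemma tree_automorphism: "tree_automorphism V E tree_map"
  unfolding tree_automorphism_def
proof (intro conjI ballI)
  show "bij_betw tree_map V V" using tree_map_inj tree_map_surj by (simp add: bij_betw_def)
  fix s t assume st: "s \<in> V" "t \<in> V"
  show "(s, t) \<in> E \<longleftrightarrow> (tree_map s, tree_map t) \<in> E"
  proof
    show "(s, t) \<in> E \<Longrightarrow> (tree_map s, tree_map t) \<in> E" using tree_map_edge(1)[OF st(1)] .
    assume "(tree_map s, tree_map t) \<in> E"
    then obtain y where "(s, y) \<in> E" "tree_map y = tree_map t" by (rule tree_map_neighbour[OF st(1)])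
    moreover have "y \<in> V" using calculation(1) edges_subset by auto
    ultimately show "(s, t) \<in> E" using inj_onD[OF tree_map_inj] st(2) by metis
  qed
qed

lemma tree_system_iso: "tree_system_iso V E Xdd P b Xdd' P' b' tree_map space_map"
  unfolding tree_system_iso_def
proof (intro conjI ballI tree_automorphism)
  fix t assume t: "t \<in> V"
  show "homeomorphic_map (Xdd t) (Xdd' (tree_map t)) (space_map t)"
    "space_map t ` (topspace (Xdd t) - P t) = topspace (Xdd' (tree_map t)) - P' (tree_map t)"
    using compatible_atD(1)[OF t] by (simp_all add: local_homeo_def)
  fix e assume "e \<in> out_edges E t"
  then obtain s where "e = (t, s)" "(t, s) \<in> E" by (cases e) (auto simp: out_edges_def)
  then show "b' (tree_map t) (edge_map tree_map e) = space_map t (b t e)"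
    using tree_map_edge(2)[OF t] by (simp add: edge_map_def)
qed

end

theorem lemma1p2:
  fixes X :: "'c topology"
    and V :: "'v set" and E :: "('v \<times> 'v) set"
    and Xdd :: "'v \<Rightarrow> 'a topology" and P :: "'v \<Rightarrow> 'a set" and b :: "'v \<Rightarrow> 'v \<times> 'v \<Rightarrow> 'a"
    and Xdd' :: "'v \<Rightarrow> 'b topology" and P' :: "'v \<Rightarrow> 'b set" and b' :: "'v \<Rightarrow> 'v \<times> 'v \<Rightarrow> 'b"
  assumes "topspace X \<noteq> {}" and "compact_space X" and "metrizable_space X"
    and "countable_inf_valence_tree V E"
    and "tree_system V E X Xdd P b"
    and "tree_system V E X Xdd' P' b'"
  shows "\<exists>lam f. tree_system_iso V E Xdd P b Xdd' P' b' lam f"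
proof -
  have tree: "is_tree V E" using assms(4) by (simp add: countable_inf_valence_tree_def)
  then obtain r where "r \<in> V" by (auto simp: is_tree_def)
  then interpret tree_system_pair V E r X Xdd P b Xdd' P' b'
    using tree assms(1,5,6) by unfold_locales
  show ?thesis using tree_system_iso by blast
qed

end
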